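(* Let $\mathbb{K}\in\{\mathbb{R},\mathbb{C}\}$ and let $\mathcal{X}$ be an infinite-dimensional topological $\mathbb{K}$-vector space whose topological dual $\mathcal{X}^{\ast}$ separates the points of $\mathcal{X}$. Then $\mathbf{F}(\mathcal{X}^{\ast})$, endowed with the weak*-Hausdorff hypertopology, is not locally connected.
   Context: Topological vector spaces are Hausdorff. $\mathcal{X}^{\ast}$ carries the weak* topology. $\mathbf{F}(\mathcal{X}^{\ast})$ is the set of nonempty weak*-closed subsets of $\mathcal{X}^{\ast}$. The weak*-Hausdorff hypertopology on $\mathbf{F}(\mathcal{X}^{\ast})$ is the topology generated by the family of extended pseudometrics $d_H^{(A)}(F,\tilde F)=\max\{\sup_{\sigma\in F}\inf_{\tilde\sigma\in\tilde F}|(\sigma-\tilde\sigma)(A)|,\ \sup_{\tilde\sigma\in\tilde F}\inf_{\sigma\in F}|(\sigma-\tilde\sigma)(A)|\}\in[0,\infty]$, $A\in\mathcal{X}$. *)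

theory Defs
  imports "HOL-Analysis.Analysis"
begin

text \<open>A (Hausdorff) topological vector space over the field 'k: the carrier is the type 'a
  (an abelian group with a Hausdorff topology, via type classes), scalar multiplication is
  the explicit operation smul, and addition and scalar multiplication are jointly continuous.\<close>
definition tvs :: "('k::real_normed_field \<Rightarrow> 'a::{ab_group_add,t2_space} \<Rightarrow> 'a) \<Rightarrow> bool" where
  "tvs smul \<longleftrightarrow> vector_space smul
     \<and> continuous_on UNIV (\<lambda>p::'a \<times> 'a. fst p + snd p)
     \<and> continuous_on UNIV (\<lambda>p::'k \<times> 'a. smul (fst p) (snd p))"

definition infinite_dimensional :: "('k::field \<Rightarrow> 'a::ab_group_add \<Rightarrow> 'a) \<Rightarrow> bool" where
  "infinite_dimensional smul \<longleftrightarrow> \<not> (\<exists>B. finite B \<and> module.span smul B = UNIV)"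

definition tdual :: "('k::real_normed_field \<Rightarrow> 'a::{ab_group_add,topological_space} \<Rightarrow> 'a) \<Rightarrow> ('a \<Rightarrow> 'k) set" where
  "tdual smul = {\<sigma>. Vector_Spaces.linear smul (*) \<sigma> \<and> continuous_on UNIV \<sigma>}"

definition dual_separates_points :: "('k::real_normed_field \<Rightarrow> 'a::{ab_group_add,topological_space} \<Rightarrow> 'a) \<Rightarrow> bool" where
  "dual_separates_points smul \<longleftrightarrow> (\<forall>x y. x \<noteq> y \<longrightarrow> (\<exists>\<sigma>\<in>tdual smul. \<sigma> x \<noteq> \<sigma> y))"

definition weak_star :: "('k::real_normed_field \<Rightarrow> 'a::{ab_group_add,topological_space} \<Rightarrow> 'a) \<Rightarrow> ('a \<Rightarrow> 'k) topology" where
  "weak_star smul = subtopology (product_topology (\<lambda>_. euclidean) UNIV) (tdual smul)"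

definition hyperspace :: "('k::real_normed_field \<Rightarrow> 'a::{ab_group_add,topological_space} \<Rightarrow> 'a) \<Rightarrow> ('a \<Rightarrow> 'k) set set" where
  "hyperspace smul = {F. F \<noteq> {} \<and> closedin (weak_star smul) F}"

definition dH :: "'a \<Rightarrow> ('a \<Rightarrow> 'k::real_normed_field) set \<Rightarrow> ('a \<Rightarrow> 'k) set \<Rightarrow> ereal" where
  "dH A F G = max (SUP \<sigma>\<in>F. INF \<tau>\<in>G. ereal (norm ((\<sigma> - \<tau>) A)))
                  (SUP \<tau>\<in>G. INF \<sigma>\<in>F. ereal (norm ((\<sigma> - \<tau>) A)))"

definition weak_star_hausdorff_hypertopology ::
  "('k::real_normed_field \<Rightarrow> 'a::{ab_group_add,topological_space} \<Rightarrow> 'a) \<Rightarrow> ('a \<Rightarrow> 'k) set topology" where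
  "weak_star_hausdorff_hypertopology smul =
     subtopology
       (topology_generated_by
         {{G \<in> hyperspace smul. dH A F G < ereal r} | A F r. F \<in> hyperspace smul \<and> r > 0})
       (hyperspace smul)"

end

theory Submission
  imports Defs
begin

text \<open>For fixed A the closed sets at finite d_H^(A)-distance from a given one form a clopen
  set, so the connected component of {0} in F(X*) only contains sets at finite
  d_H^(A)-distance from {0}, for every A. Every neighbourhood of {0}, however, is controlled by
  finitely many A_1, ..., A_n only and so contains their annihilator; choosing x outside
  their span and a continuous functional \<sigma> that vanishes on the A_i with \<sigma> x \<noteq> 0, the
  annihilator contains all multiples of \<sigma> and is therefore at infinite d_H^(x)-distance from {0}.
  Hence the component of {0} is not open.\<close>

locale ext_pseudometric_family =
  fixes S :: "'x set" and d :: "'i \<Rightarrow> 'x \<Rightarrow> 'x \<Rightarrow> ereal"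
  assumes nonneg: "x \<in> S \<Longrightarrow> 0 \<le> d i x y"
    and zero: "x \<in> S \<Longrightarrow> d i x x = 0"
    and commute: "d i x y = d i y x"
    and triangle: "y \<in> S \<Longrightarrow> d i x z \<le> d i x y + d i y z"
begin

definition gauge_topology :: "'x topology" where
  "gauge_topology = subtopology
     (topology_generated_by {{y \<in> S. d i x y < ereal r} | i x r. x \<in> S \<and> r > 0}) S"

lemma openin_ball:
  assumes "x \<in> S" "r > 0"
  shows "openin gauge_topology {y \<in> S. d i x y < ereal r}"
proof -
  have "openin (topology_generated_by {{y \<in> S. d i x y < ereal r} | i x r. x \<in> S \<and> r > 0})
          {y \<in> S. d i x y < ereal r}"
    unfolding openin_topology_generated_by_iff
    by (rule generate_topology_on.Basis) (use assms in blast)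
  then show ?thesis
    unfolding gauge_topology_def openin_subtopology by blast
qed

lemma centre_in_ball: "x \<in> S \<Longrightarrow> r > 0 \<Longrightarrow> x \<in> {y \<in> S. d i x y < ereal r}"
  by (simp add: zero)

lemma topspace_gauge_topology: "topspace gauge_topology = S"
proof
  show "topspace gauge_topology \<subseteq> S"
    by (simp add: gauge_topology_def)
  show "S \<subseteq> topspace gauge_topology"
  proof
    fix x assume "x \<in> S"
    with openin_subset[OF openin_ball] centre_in_ball show "x \<in> topspace gauge_topology"
      by (meson subsetD zero_less_one)
  qed
qed

lemma ball_contains_ball:
  assumes "z \<in> S" "x \<in> S" "d i z x < ereal r"
  obtains e where "e > 0" "{y \<in> S. d i x y < ereal e} \<subseteq> {y \<in> S. d i z y < ereal r}"
proof -
  obtain t where t: "d i z x = ereal t" "t < r"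
    using assms nonneg[of z i x] by (cases "d i z x") auto
  have "{y \<in> S. d i x y < ereal (r - t)} \<subseteq> {y \<in> S. d i z y < ereal r}"
  proof safe
    fix y assume "y \<in> S" "d i x y < ereal (r - t)"
    then have "d i z x + d i x y < ereal r"
      using t by (cases "d i x y") auto
    then show "d i z y < ereal r"
      using triangle[OF \<open>x \<in> S\<close>, of i z y] by order
  qed
  then show thesis
    using t by (intro that[of "r - t"]) auto
qed

lemma generated_open_contains_basic_neighbourhood:
  assumes "generate_topology_on {{y \<in> S. d i x y < ereal r} | i x r. x \<in> S \<and> r > 0} U"
    and "x \<in> U" "x \<in> S"
  shows "\<exists>I e. finite I \<and> e > 0 \<and> {y \<in> S. \<forall>i\<in>I. d i x y < ereal e} \<subseteq> U"
  using assms
proof (induction arbitrary: x)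
  case Empty
  then show ?case by simp
next
  case (Int U V)
  obtain I e where "finite I" "e > 0" "{y \<in> S. \<forall>i\<in>I. d i x y < ereal e} \<subseteq> U"
    using Int.IH(1) Int.prems by blast
  obtain J e' where "finite J" "e' > 0" "{y \<in> S. \<forall>i\<in>J. d i x y < ereal e'} \<subseteq> V"
    using Int.IH(2) Int.prems by blast
  have "{y \<in> S. \<forall>i\<in>I \<union> J. d i x y < ereal (min e e')} \<subseteq> U \<inter> V"
  proof (intro subsetI, elim CollectE conjE)
    fix y assume y: "y \<in> S" "\<forall>i\<in>I \<union> J. d i x y < ereal (min e e')"
    have "ereal (min e e') \<le> ereal e" "ereal (min e e') \<le> ereal e'"
      by simp_all
    with y have "\<forall>i\<in>I. d i x y < ereal e" "\<forall>i\<in>J. d i x y < ereal e'"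
      by (meson UnCI less_le_trans)+
    with y show "y \<in> U \<inter> V"
      using \<open>{y \<in> S. \<forall>i\<in>I. d i x y < ereal e} \<subseteq> U\<close>
        \<open>{y \<in> S. \<forall>i\<in>J. d i x y < ereal e'} \<subseteq> V\<close> by blast
  qed
  moreover have "finite (I \<union> J)" "min e e' > 0"
    using \<open>finite I\<close> \<open>finite J\<close> \<open>e > 0\<close> \<open>e' > 0\<close> by simp_all
  ultimately show ?case
    by blast
next
  case (UN K)
  then obtain k where "k \<in> K" "x \<in> k"
    by blast
  with UN.IH UN.prems obtain I e where "finite I" "e > 0" "{y \<in> S. \<forall>i\<in>I. d i x y < ereal e} \<subseteq> k"
    by meson
  with \<open>k \<in> K\<close> show ?case
    by blast
next
  case (Basis B)
  then obtain i z r where B: "B = {y \<in> S. d i z y < ereal r}" and "z \<in> S"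
    by blast
  with Basis.prems have "d i z x < ereal r"
    by blast
  with \<open>z \<in> S\<close> \<open>x \<in> S\<close> obtain e where "e > 0" "{y \<in> S. d i x y < ereal e} \<subseteq> B"
    unfolding B by (rule ball_contains_ball)
  then show ?case
    by (intro exI[of _ "{i}"] exI[of _ e]) simp
qed

lemma gauge_topology_basic_neighbourhood:
  assumes "openin gauge_topology U" "x \<in> U"
  obtains I e where "finite I" "e > 0" "{y \<in> S. \<forall>i\<in>I. d i x y < ereal e} \<subseteq> U"
proof -
  obtain T where T: "generate_topology_on {{y \<in> S. d i x y < ereal r} | i x r. x \<in> S \<and> r > 0} T"
    "U = T \<inter> S"
    using assms(1) unfolding gauge_topology_def openin_subtopology openin_topology_generated_by_iff
    by blast
  show thesis
    using generated_open_contains_basic_neighbourhood[OF T(1), of x] assms(2) T(2) that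
    by blast
qed

lemma finite_distance_trans:
  assumes "y \<in> S" "d i x y \<noteq> \<infinity>" "d i y z \<noteq> \<infinity>"
  shows "d i x z \<noteq> \<infinity>"
  using triangle[OF assms(1), of i x z] assms(2,3)
  by (metis ereal_plus_eq_PInfty ereal_infty_less_eq(1))

lemma openin_gauge_topologyI:
  assumes "U \<subseteq> S" "\<And>y. y \<in> U \<Longrightarrow> {z \<in> S. d i y z < ereal 1} \<subseteq> U"
  shows "openin gauge_topology U"
  using assms openin_ball centre_in_ball by (subst openin_subopen) (meson subsetD zero_less_one)

lemma unit_ball_infinite_distance_iff:
  assumes "y \<in> S" "z \<in> S" "d i y z < ereal 1"
  shows "d i x z = \<infinity> \<longleftrightarrow> d i x y = \<infinity>"
proof -
  have "d i y z \<noteq> \<infinity>" "d i z y \<noteq> \<infinity>"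
    using assms(3) commute[of i z y] by auto
  then show ?thesis
    using finite_distance_trans[OF assms(1), of i x z] finite_distance_trans[OF assms(2), of i x y]
    by blast
qed

lemma openin_finite_distance_class: "openin gauge_topology {y \<in> S. d i x y \<noteq> \<infinity>}"
  by (rule openin_gauge_topologyI[where i = i]) (auto simp: unit_ball_infinite_distance_iff)

lemma closedin_finite_distance_class: "closedin gauge_topology {y \<in> S. d i x y \<noteq> \<infinity>}"
proof -
  have "openin gauge_topology {y \<in> S. d i x y = \<infinity>}"
    by (rule openin_gauge_topologyI[where i = i]) (auto simp: unit_ball_infinite_distance_iff)
  moreover have "topspace gauge_topology - {y \<in> S. d i x y \<noteq> \<infinity>} = {y \<in> S. d i x y = \<infinity>}"
    by (auto simp: topspace_gauge_topology)
  ultimately show ?thesis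
    by (simp add: closedin_def topspace_gauge_topology)
qed

lemma not_locally_connected_gauge_topology:
  assumes "x \<in> S"
    and escape: "\<And>I e. finite I \<Longrightarrow> e > 0 \<Longrightarrow>
                   \<exists>y\<in>S. (\<forall>i\<in>I. d i x y < ereal e) \<and> (\<exists>j. d j x y = \<infinity>)"
  shows "\<not> locally_connected_space gauge_topology"
proof
  assume "locally_connected_space gauge_topology"
  define K where "K = connected_component_of_set gauge_topology x"
  have "openin gauge_topology K"
    unfolding K_def by (rule openin_connected_component_of_locally_connected_space) fact
  moreover have "x \<in> K"
    using assms(1) by (simp add: K_def connected_component_of_refl topspace_gauge_topology)
  ultimately obtain I e where "finite I" "e > 0" "{y \<in> S. \<forall>i\<in>I. d i x y < ereal e} \<subseteq> K"
    by (rule gauge_topology_basic_neighbourhood)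
  with escape obtain y j where "y \<in> K" "d j x y = \<infinity>"
    by blast
  have "K \<subseteq> {y \<in> S. d j x y \<noteq> \<infinity>} \<or> disjnt K {y \<in> S. d j x y \<noteq> \<infinity>}"
    unfolding K_def
    by (rule connectedin_clopen_cases[OF connectedin_connected_component_of
          closedin_finite_distance_class openin_finite_distance_class])
  moreover have "x \<in> {y \<in> S. d j x y \<noteq> \<infinity>}"
    using assms(1) by (simp add: zero)
  ultimately show False
    using \<open>x \<in> K\<close> \<open>y \<in> K\<close> \<open>d j x y = \<infinity>\<close> by (auto simp: disjnt_def)
qed

end

definition annihilator ::
  "('k::real_normed_field \<Rightarrow> 'a::{ab_group_add,topological_space} \<Rightarrow> 'a) \<Rightarrow> 'a set \<Rightarrow> ('a \<Rightarrow> 'k) set"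
  where "annihilator smul A = {\<sigma> \<in> tdual smul. \<forall>a\<in>A. \<sigma> a = 0}"

context
  fixes smul :: "'k::real_normed_field \<Rightarrow> 'a::{ab_group_add,topological_space} \<Rightarrow> 'a"
  assumes vs: "vector_space smul"
begin

interpretation vector_space_pair smul "(*) :: 'k \<Rightarrow> 'k \<Rightarrow> 'k"
  by (intro vector_space_pair.intro vs vector_space_over_itself.vector_space_axioms)

lemma zero_in_tdual: "(\<lambda>x. 0) \<in> tdual smul"
  by (simp add: tdual_def linear_zero)

lemma tdual_diff: "\<sigma> \<in> tdual smul \<Longrightarrow> \<tau> \<in> tdual smul \<Longrightarrow> (\<lambda>x. \<sigma> x - \<tau> x) \<in> tdual smul"
  by (auto simp: tdual_def intro: linear_compose_sub continuous_intros)

lemma tdual_scale: "\<sigma> \<in> tdual smul \<Longrightarrow> (\<lambda>x. c * \<sigma> x) \<in> tdual smul"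
  by (auto simp: tdual_def intro: linear_compose_scale_right continuous_intros)

lemma annihilator_scale: "\<sigma> \<in> annihilator smul A \<Longrightarrow> (\<lambda>x. c * \<sigma> x) \<in> annihilator smul A"
  by (simp add: annihilator_def tdual_scale)

lemma annihilator_UNIV: "annihilator smul UNIV = {\<lambda>x. 0}"
  using zero_in_tdual by (auto simp: annihilator_def)

lemma annihilator_in_hyperspace: "annihilator smul A \<in> hyperspace smul"
proof -
  have "closed (\<Inter>a\<in>A. {\<sigma> :: 'a \<Rightarrow> 'k. \<sigma> a = 0})"
    by (intro closed_INT ballI closed_Collect_eq continuous_on_product_coordinates continuous_on_const)
  then have "closedin (weak_star smul) (tdual smul \<inter> (\<Inter>a\<in>A. {\<sigma>. \<sigma> a = 0}))"
    by (simp add: weak_star_def euclidean_product_topology closedin_closed_Int)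
  moreover have "annihilator smul A = tdual smul \<inter> (\<Inter>a\<in>A. {\<sigma>. \<sigma> a = 0})"
    by (auto simp: annihilator_def)
  moreover have "(\<lambda>x. 0) \<in> annihilator smul A"
    by (simp add: annihilator_def zero_in_tdual)
  ultimately show ?thesis
    by (auto simp: hyperspace_def)
qed

lemma annihilator_exists_nonzero:
  assumes "dual_separates_points smul" "finite A" "x \<notin> module.span smul A"
  shows "\<exists>\<sigma>\<in>annihilator smul A. \<sigma> x \<noteq> 0"
  using assms(2,3)
proof (induction A arbitrary: x rule: finite_induct)
  case empty
  then obtain \<sigma> where "\<sigma> \<in> tdual smul" "\<sigma> x \<noteq> \<sigma> 0"
    using assms(1) unfolding dual_separates_points_def by fastforce
  moreover from \<open>\<sigma> \<in> tdual smul\<close> have "\<sigma> 0 = 0"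
    by (simp add: tdual_def linear_0)
  ultimately show ?case
    by (auto simp: annihilator_def)
next
  case (insert a A)
  show ?case
  proof (cases "a \<in> vs1.span A")
    case True
    then have "x \<notin> vs1.span A"
      using insert.prems by (simp add: vs1.span_redundant)
    then obtain \<sigma> where \<sigma>: "\<sigma> \<in> annihilator smul A" "\<sigma> x \<noteq> 0"
      using insert.IH by blast
    then have "\<sigma> a = 0"
      using True unfolding annihilator_def tdual_def by (blast intro: linear_eq_0_on_span)
    with \<sigma> show ?thesis
      by (auto simp: annihilator_def)
  next
    case False
    then obtain \<rho> where \<rho>: "\<rho> \<in> annihilator smul A" "\<rho> a \<noteq> 0"
      using insert.IH by blast
    define c where "c = \<rho> x / \<rho> a"
    have "x - smul c a \<notin> vs1.span A"
      using insert.prems vs1.span_add[of "x - smul c a" "insert a A" "smul c a"]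
        vs1.span_mono[of A "insert a A"] vs1.span_scale[OF vs1.span_base, of a "insert a A" c] by auto
    then obtain \<sigma> where \<sigma>: "\<sigma> \<in> annihilator smul A" "\<sigma> (x - smul c a) \<noteq> 0"
      using insert.IH by blast
    \<comment> \<open>correct \<sigma> by a multiple of \<rho> so that it vanishes at a; its value at x is then \<sigma> (x - c a)\<close>
    define \<tau> where "\<tau> = (\<lambda>y. \<sigma> y - (\<sigma> a / \<rho> a) * \<rho> y)"
    have "\<tau> \<in> tdual smul"
      using \<sigma>(1) \<rho>(1) unfolding \<tau>_def annihilator_def by (intro tdual_diff tdual_scale) simp_all
    moreover have "\<tau> a = 0" "\<forall>b\<in>A. \<tau> b = 0"
      using \<rho> \<sigma>(1) by (auto simp: \<tau>_def annihilator_def)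
    moreover have "\<tau> x = \<sigma> (x - smul c a)"
      using \<sigma>(1) \<rho>(2) unfolding annihilator_def tdual_def
      by (auto simp: \<tau>_def c_def linear_diff linear_scale field_simps)
    ultimately show ?thesis
      using \<sigma>(2) by (auto simp: annihilator_def)
  qed
qed

end

definition excess :: "'a \<Rightarrow> ('a \<Rightarrow> 'k::real_normed_field) set \<Rightarrow> ('a \<Rightarrow> 'k) set \<Rightarrow> ereal" where
  "excess A F G = (SUP \<sigma>\<in>F. INF \<tau>\<in>G. ereal (norm (\<sigma> A - \<tau> A)))"

lemma dH_excess: "dH A F G = max (excess A F G) (excess A G F)"
  unfolding dH_def excess_def by (simp add: norm_minus_commute)

lemma excess_nonneg:
  assumes "F \<noteq> {}"
  shows "0 \<le> excess A F G"
proof -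
  obtain \<sigma> where "\<sigma> \<in> F"
    using assms by blast
  have "0 \<le> (INF \<tau>\<in>G. ereal (norm (\<sigma> A - \<tau> A)))"
    by (rule INF_greatest) simp
  also have "\<dots> \<le> excess A F G"
    unfolding excess_def using \<open>\<sigma> \<in> F\<close> by (rule SUP_upper)
  finally show ?thesis .
qed

lemma excess_self: "excess A F F \<le> 0"
  unfolding excess_def by (rule SUP_least, rule INF_lower2) auto

lemma INF_norm_diff_triangle:
  fixes s t :: "'b::real_normed_vector"
  shows "(INF k\<in>K. ereal (norm (s - f k))) \<le> ereal (norm (s - t)) + (INF k\<in>K. ereal (norm (t - f k)))"
proof (cases "K = {}")
  case False
  have "(INF k\<in>K. ereal (norm (s - f k))) \<le> (INF k\<in>K. ereal (norm (s - t)) + ereal (norm (t - f k)))"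
    by (rule INF_mono, rule bexI) (auto intro: norm_diff_triangle_le)
  also have "\<dots> = ereal (norm (s - t)) + (INF k\<in>K. ereal (norm (t - f k)))"
    using False by (intro INF_ereal_add_right) auto
  finally show ?thesis .
qed (simp add: top_ereal_def)

lemma excess_triangle:
  assumes "G \<noteq> {}"
  shows "excess A F K \<le> excess A F G + excess A G K"
  unfolding excess_def[of A F K]
proof (rule SUP_least)
  fix \<sigma> assume "\<sigma> \<in> F"
  let ?e = "excess A G K"
  have "(INF \<kappa>\<in>K. ereal (norm (\<sigma> A - \<kappa> A)))
        \<le> (INF \<tau>\<in>G. ereal (norm (\<sigma> A - \<tau> A)) + (INF \<kappa>\<in>K. ereal (norm (\<tau> A - \<kappa> A))))"
    by (rule INF_greatest) (rule INF_norm_diff_triangle)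
  also have "\<dots> \<le> (INF \<tau>\<in>G. ereal (norm (\<sigma> A - \<tau> A)) + ?e)"
  proof (rule INF_mono)
    fix \<tau> assume "\<tau> \<in> G"
    then have "(INF \<kappa>\<in>K. ereal (norm (\<tau> A - \<kappa> A))) \<le> ?e"
      unfolding excess_def by (rule SUP_upper)
    with \<open>\<tau> \<in> G\<close> show "\<exists>\<tau>'\<in>G. ereal (norm (\<sigma> A - \<tau>' A)) + (INF \<kappa>\<in>K. ereal (norm (\<tau>' A - \<kappa> A)))
        \<le> ereal (norm (\<sigma> A - \<tau> A)) + ?e"
      by (intro bexI[of _ \<tau>] add_left_mono)
  qed
  also have "\<dots> = (INF \<tau>\<in>G. ereal (norm (\<sigma> A - \<tau> A))) + ?e"
    using assms excess_nonneg[OF assms, of A K] by (intro INF_ereal_add_left) auto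
  also have "\<dots> \<le> excess A F G + ?e"
    unfolding excess_def[of A F G] using \<open>\<sigma> \<in> F\<close> by (intro add_right_mono SUP_upper)
  finally show "(INF \<kappa>\<in>K. ereal (norm (\<sigma> A - \<kappa> A))) \<le> excess A F G + ?e" .
qed

lemma dH_triangle:
  assumes "G \<noteq> {}"
  shows "dH A F K \<le> dH A F G + dH A G K"
proof -
  have "excess A F K \<le> excess A F G + excess A G K"
    by (rule excess_triangle[OF assms])
  also have "\<dots> \<le> dH A F G + dH A G K"
    unfolding dH_excess by (intro add_mono max.cobounded1)
  finally have FK: "excess A F K \<le> dH A F G + dH A G K" .
  have "excess A K F \<le> excess A K G + excess A G F"
    by (rule excess_triangle[OF assms])
  also have "\<dots> \<le> dH A G K + dH A F G"
    unfolding dH_excess by (intro add_mono max.cobounded2)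
  finally have KF: "excess A K F \<le> dH A F G + dH A G K"
    by (simp add: add.commute)
  from FK KF show ?thesis
    by (simp add: dH_excess)
qed

lemma ext_pseudometric_family_dH:
  fixes smul :: "'k::real_normed_field \<Rightarrow> 'a::{ab_group_add,topological_space} \<Rightarrow> 'a"
  shows "ext_pseudometric_family (hyperspace smul) dH"
proof
  fix F G :: "('a \<Rightarrow> 'k::real_normed_field) set" and A :: 'a
  assume "F \<in> hyperspace smul"
  then have "F \<noteq> {}"
    by (simp add: hyperspace_def)
  then show "0 \<le> dH A F G" "dH A F F = 0"
    using excess_nonneg[of F A] excess_self[of A F] by (auto simp: dH_excess le_max_iff_disj antisym)
next
  fix A :: 'a and F G :: "('a \<Rightarrow> 'k) set"
  show "dH A F G = dH A G F"
    by (simp add: dH_excess max.commute)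
next
  fix A :: 'a and F G K :: "('a \<Rightarrow> 'k) set"
  assume "G \<in> hyperspace smul"
  then show "dH A F K \<le> dH A F G + dH A G K"
    by (intro dH_triangle) (simp add: hyperspace_def)
qed

lemma weak_star_hausdorff_hypertopology_eq_gauge_topology:
  fixes smul :: "'k::real_normed_field \<Rightarrow> 'a::{ab_group_add,topological_space} \<Rightarrow> 'a"
  shows "weak_star_hausdorff_hypertopology smul = ext_pseudometric_family.gauge_topology (hyperspace smul) dH"
  unfolding weak_star_hausdorff_hypertopology_def
  by (rule ext_pseudometric_family.gauge_topology_def[OF ext_pseudometric_family_dH, symmetric])

lemma dH_singleton_zero:
  assumes "G \<noteq> {}"
  shows "dH A {\<lambda>x. 0} G = (SUP \<tau>\<in>G. ereal (norm (\<tau> A)))"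
proof -
  have "(INF \<tau>\<in>G. ereal (norm (\<tau> A))) \<le> (SUP \<tau>\<in>G. ereal (norm (\<tau> A)))"
    using assms by (rule INF_le_SUP)
  then show ?thesis
    by (simp add: dH_def max_def)
qed

lemma SUP_norm_eq_PInf_if_multiples:
  fixes \<sigma> :: "'a \<Rightarrow> 'k::real_normed_field"
  assumes "\<And>c. (\<lambda>x. c * \<sigma> x) \<in> G" "\<sigma> A \<noteq> 0"
  shows "(SUP \<tau>\<in>G. ereal (norm (\<tau> A))) = \<infinity>"
proof (rule SUP_PInfty)
  fix n :: nat
  define c :: 'k where "c = of_real (real n / norm (\<sigma> A))"
  have "norm (c * \<sigma> A) = real n"
    using assms(2) by (simp add: c_def norm_mult norm_divide)
  with assms(1)[of c] show "\<exists>\<tau>\<in>G. ereal (real n) \<le> ereal (norm (\<tau> A))"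
    by (intro bexI[of _ "\<lambda>x. c * \<sigma> x"]) simp_all
qed

theorem hypertopology_not_locally_connected:
  fixes smul :: "'k::real_normed_field \<Rightarrow> 'a::{ab_group_add,topological_space} \<Rightarrow> 'a"
  assumes vs: "vector_space smul"
    and "infinite_dimensional smul" and "dual_separates_points smul"
  shows "\<not> locally_connected_space (weak_star_hausdorff_hypertopology smul)"
proof -
  interpret ext_pseudometric_family "hyperspace smul" dH
    by (rule ext_pseudometric_family_dH)
  have "\<not> locally_connected_space gauge_topology"
  proof (rule not_locally_connected_gauge_topology)
    show "{\<lambda>x. 0} \<in> hyperspace smul"
      using annihilator_in_hyperspace[OF vs, of UNIV] by (simp add: annihilator_UNIV[OF vs])
  next
    fix A :: "'a set" and e :: real
    assume "finite A" "e > 0"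
    then obtain x where "x \<notin> module.span smul A"
      using assms(2) unfolding infinite_dimensional_def by blast
    then obtain \<sigma> where \<sigma>: "\<sigma> \<in> annihilator smul A" "\<sigma> x \<noteq> 0"
      using annihilator_exists_nonzero[OF vs assms(3) \<open>finite A\<close>] by blast
    let ?G = "annihilator smul A"
    have "?G \<noteq> {}"
      using \<sigma>(1) by blast
    have "dH a {\<lambda>x. 0} ?G = 0" if "a \<in> A" for a
      using that \<open>?G \<noteq> {}\<close> by (simp add: dH_singleton_zero annihilator_def)
    moreover have "dH x {\<lambda>x. 0} ?G = \<infinity>"
      unfolding dH_singleton_zero[OF \<open>?G \<noteq> {}\<close>]
      by (rule SUP_norm_eq_PInf_if_multiples[OF annihilator_scale[OF vs \<sigma>(1)] \<sigma>(2)])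
    ultimately show "\<exists>G\<in>hyperspace smul. (\<forall>a\<in>A. dH a {\<lambda>x. 0} G < ereal e) \<and> (\<exists>j. dH j {\<lambda>x. 0} G = \<infinity>)"
      using annihilator_in_hyperspace[OF vs, of A] \<open>e > 0\<close> by (intro bexI[of _ ?G]) auto
  qed
  then show ?thesis
    by (simp add: weak_star_hausdorff_hypertopology_eq_gauge_topology)
qed

theorem corollary3p5:
  fixes scaleR' :: "real \<Rightarrow> 'a::{ab_group_add,t2_space} \<Rightarrow> 'a"
    and scaleC' :: "complex \<Rightarrow> 'a \<Rightarrow> 'a"
  shows "(tvs scaleR' \<and> infinite_dimensional scaleR' \<and> dual_separates_points scaleR'
            \<longrightarrow> \<not> locally_connected_space (weak_star_hausdorff_hypertopology scaleR'))
       \<and> (tvs scaleC' \<and> infinite_dimensional scaleC' \<and> dual_separates_points scaleC'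
            \<longrightarrow> \<not> locally_connected_space (weak_star_hausdorff_hypertopology scaleC'))"
  using hypertopology_not_locally_connected[of scaleR'] hypertopology_not_locally_connected[of scaleC']
  by (auto simp: tvs_def)

end
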